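(* Let $\kappa$ be a cardinal, $\mathbb{F}$ a field, and $V$ the vector space over $\mathbb{F}$ presented by generators $x_\alpha,y_\alpha,z_\alpha$ ($\alpha\in\kappa$) and relations $x_\alpha+y_\alpha+z_\alpha=0$. Let $F(A,B,C)=\mathrm{Span}\{x_\alpha:\alpha\in A\}+\mathrm{Span}\{y_\beta:\beta\in B\}+\mathrm{Span}\{z_\gamma:\gamma\in C\}$ for $A,B,C\subseteq\kappa$. If $(A,B,C)$ and $(A',B',C')$ are balanced triples of subsets of $\kappa$ (i.e. $A\cap B=A\cap C=B\cap C$ and $A'\cap B'=A'\cap C'=B'\cap C'$), then $F(A,B,C)\cap F(A',B',C')=F(A\cap A',\,B\cap B',\,C\cap C')$. *)

theory Defs
  imports Complex_Main "HOL-Library.Function_Algebras" "HOL-Library.Product_Plus"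
begin

text \<open>Concrete model of the presented space V: the vector space over the field 'f
  presented by generators x_a, y_a, z_a (a ranging over the index type 'k, playing the
  role of the cardinal kappa) with relations x_a + y_a + z_a = 0 is realised as the
  finitely supported functions 'k => 'f * 'f, with x_a = (1,0) at a, y_a = (0,1) at a,
  z_a = (-1,-1) at a.  We work in the ambient module of all functions 'k => 'f * 'f,
  which contains V as the span of the generators; spans are unaffected.\<close>

definition scaleV :: "'f::field \<Rightarrow> ('k \<Rightarrow> 'f \<times> 'f) \<Rightarrow> ('k \<Rightarrow> 'f \<times> 'f)" where
  "scaleV c v = (\<lambda>k. (c * fst (v k), c * snd (v k)))"

definition xv :: "'k \<Rightarrow> ('k \<Rightarrow> 'f::field \<times> 'f)" where
  "xv a = (\<lambda>k. if k = a then (1, 0) else (0, 0))"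

definition yv :: "'k \<Rightarrow> ('k \<Rightarrow> 'f::field \<times> 'f)" where
  "yv a = (\<lambda>k. if k = a then (0, 1) else (0, 0))"

definition zv :: "'k \<Rightarrow> ('k \<Rightarrow> 'f::field \<times> 'f)" where
  "zv a = (\<lambda>k. if k = a then (-1, -1) else (0, 0))"

lemma scaleV_module: "module (scaleV :: 'f::field \<Rightarrow> _ \<Rightarrow> ('k \<Rightarrow> 'f \<times> 'f))"
  by unfold_locales (auto simp: scaleV_def fun_eq_iff algebra_simps)

definition FF :: "'k set \<Rightarrow> 'k set \<Rightarrow> 'k set \<Rightarrow> ('k \<Rightarrow> 'f::field \<times> 'f) set" where
  "FF A B C = Modules.module.span scaleV (xv ` A \<union> yv ` B \<union> zv ` C)"

definition balanced :: "'k set \<Rightarrow> 'k set \<Rightarrow> 'k set \<Rightarrow> bool" where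
  "balanced A B C \<longleftrightarrow> A \<inter> B = A \<inter> C \<and> A \<inter> C = B \<inter> C"

lemma "xv a + yv a + zv a = (0 :: 'k \<Rightarrow> 'f::field \<times> 'f)"
  by (auto simp: xv_def yv_def zv_def fun_eq_iff zero_prod_def)

end

theory Submission
  imports Defs
begin

text \<open>Both sides are described coordinatewise: a vector v lies in F(A,B,C) iff it has finite
  support and each v k lies in the span, inside the plane of coordinate k, of those of
  x_k = (1,0), y_k = (0,1), z_k = (-1,-1) that are generators of F(A,B,C).  Any two of these
  vectors span the plane, so this local span is the whole plane, a line or zero according to
  whether k lies in at least two, exactly one or none of A, B, C.  Balancedness says that a
  coordinate lying in two of the sets lies in all three, and for such membership patterns
  intersecting local spans commutes with intersecting the index sets.\<close>

interpretation V: module "scaleV :: 'f::field \<Rightarrow> ('k \<Rightarrow> 'f \<times> 'f) \<Rightarrow> _"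
  by (rule scaleV_module)

definition local_span :: "bool \<Rightarrow> bool \<Rightarrow> bool \<Rightarrow> ('f::field \<times> 'f) set" where
  "local_span a b c = {p. (a \<and> \<not> b \<and> \<not> c \<longrightarrow> snd p = 0) \<and> (\<not> a \<and> b \<and> \<not> c \<longrightarrow> fst p = 0)
     \<and> (\<not> a \<and> \<not> b \<and> c \<longrightarrow> fst p = snd p) \<and> (\<not> a \<and> \<not> b \<and> \<not> c \<longrightarrow> p = 0)}"

definition coordwise_span :: "'k set \<Rightarrow> 'k set \<Rightarrow> 'k set \<Rightarrow> ('k \<Rightarrow> 'f::field \<times> 'f) set" where
  "coordwise_span A B C =
     {v. finite {k. v k \<noteq> 0} \<and> (\<forall>k. v k \<in> local_span (k \<in> A) (k \<in> B) (k \<in> C))}"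

definition delta :: "'k \<Rightarrow> 'f::field \<times> 'f \<Rightarrow> ('k \<Rightarrow> 'f \<times> 'f)" where
  "delta k p = (\<lambda>j. if j = k then p else 0)"

lemma sum_fun_apply: "(\<Sum>k\<in>S. f k) j = (\<Sum>k\<in>S. f k j)"
  by (induction S rule: infinite_finite_induct) auto

lemma local_span_add:
  "p \<in> local_span a b c \<Longrightarrow> q \<in> local_span a b c \<Longrightarrow> p + q \<in> local_span a b c"
  by (cases p; cases q) (auto simp: local_span_def zero_prod_def)

lemma local_span_scale:
  "p \<in> local_span a b c \<Longrightarrow> (r * fst p, r * snd p) \<in> local_span a b c"
  by (cases p) (auto simp: local_span_def zero_prod_def)

lemma local_span_decompose:
  assumes "p \<in> local_span a b c"
  obtains r s t where "p = (r - t, s - t)" "a \<or> r = 0" "b \<or> s = 0" "c \<or> t = 0"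
proof -
  note witness = that
  obtain u w where p: "p = (u, w)" by (cases p)
  consider "a" "b" | "a" "\<not> b" "c" | "\<not> a" "b" "c" | "\<not> a \<or> \<not> b" "\<not> c" | "\<not> a" "\<not> b" "c"
    by blast
  then show thesis
  proof cases
    case 1 then show ?thesis using witness[where r = u and s = w and t = 0] by (simp add: p)
  next
    case 2 then show ?thesis using witness[where r = "u - w" and s = 0 and t = "- w"]
      by (simp add: p)
  next
    case 3 then show ?thesis using witness[where r = 0 and s = "w - u" and t = "- u"]
      by (simp add: p)
  next
    case 4 then show ?thesis using assms witness[where r = u and s = w and t = 0]
      by (auto simp: p local_span_def zero_prod_def)
  next
    case 5 then show ?thesis using assms witness[where r = 0 and s = 0 and t = "- u"]
      by (auto simp: p local_span_def zero_prod_def)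
  qed
qed

lemma local_span_Int:
  assumes "a \<and> b \<longleftrightarrow> a \<and> c" "a \<and> c \<longleftrightarrow> b \<and> c"
    and "a' \<and> b' \<longleftrightarrow> a' \<and> c'" "a' \<and> c' \<longleftrightarrow> b' \<and> c'"
  shows "local_span a b c \<inter> local_span a' b' c'
           = (local_span (a \<and> a') (b \<and> b') (c \<and> c') :: ('f::field \<times> 'f) set)"
  using assms unfolding local_span_def set_eq_iff
  by (cases a; cases b; cases c; cases a'; cases b'; cases c') (auto simp: prod_eq_iff)

lemma coordwise_span_subspace:
  "V.subspace (coordwise_span A B C :: ('k \<Rightarrow> 'f::field \<times> 'f) set)"
proof (rule V.subspaceI)
  show "0 \<in> coordwise_span A B C"
    by (auto simp: coordwise_span_def local_span_def zero_prod_def)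
next
  fix v w :: "'k \<Rightarrow> 'f \<times> 'f"
  assume "v \<in> coordwise_span A B C" "w \<in> coordwise_span A B C"
  moreover have "{k. (v + w) k \<noteq> 0} \<subseteq> {k. v k \<noteq> 0} \<union> {k. w k \<noteq> 0}" by auto
  ultimately show "v + w \<in> coordwise_span A B C"
    by (auto simp: coordwise_span_def local_span_add intro: finite_subset)
next
  fix r and v :: "'k \<Rightarrow> 'f \<times> 'f"
  assume "v \<in> coordwise_span A B C"
  moreover have "{k. scaleV r v k \<noteq> 0} \<subseteq> {k. v k \<noteq> 0}"
    by (auto simp: scaleV_def zero_prod_def)
  ultimately show "scaleV r v \<in> coordwise_span A B C"
    by (auto simp: coordwise_span_def scaleV_def local_span_scale intro: finite_subset)
qed

lemma FF_subset_coordwise_span: "FF A B C \<subseteq> coordwise_span A B C"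
  unfolding FF_def
proof (rule V.span_minimal[OF _ coordwise_span_subspace])
  have "finite {k. (if k = a then p else 0) \<noteq> 0}" for a and p :: "'f::field \<times> 'f"
    by (rule finite_subset[of _ "{a}"]) auto
  then show "xv ` A \<union> yv ` B \<union> zv ` C \<subseteq> coordwise_span A B C"
    by (auto simp: coordwise_span_def xv_def yv_def zv_def local_span_def zero_prod_def)
qed

lemma scaleV_generator_in_FF:
  assumes "(g = xv \<and> k \<in> A) \<or> (g = yv \<and> k \<in> B) \<or> (g = zv \<and> k \<in> C) \<or> r = 0"
  shows "scaleV r (g k) \<in> FF A B C"
proof (cases "r = 0")
  case True
  then show ?thesis using V.span_zero by (simp add: FF_def V.scale_zero_left)
next
  case False
  then have "g k \<in> xv ` A \<union> yv ` B \<union> zv ` C" using assms by auto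
  then show ?thesis unfolding FF_def by (intro V.span_scale V.span_base)
qed

lemma delta_in_FF:
  assumes "p \<in> local_span (k \<in> A) (k \<in> B) (k \<in> C)"
  shows "delta k p \<in> FF A B C"
proof -
  obtain r s t where p: "p = (r - t, s - t)"
    and r: "k \<in> A \<or> r = 0" and s: "k \<in> B \<or> s = 0" and t: "k \<in> C \<or> t = 0"
    using local_span_decompose[OF assms] .
  have "delta k p = scaleV r (xv k) + scaleV s (yv k) + scaleV t (zv k)"
    by (auto simp: p delta_def scaleV_def xv_def yv_def zv_def fun_eq_iff zero_prod_def)
  also have "\<dots> \<in> FF A B C"
    using r s t unfolding FF_def
    by (intro V.span_add) (auto simp flip: FF_def intro: scaleV_generator_in_FF)
  finally show ?thesis .
qed

lemma coordwise_span_subset_FF: "coordwise_span A B C \<subseteq> FF A B C"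
proof
  fix v assume v: "v \<in> coordwise_span A B C"
  let ?S = "{k. v k \<noteq> 0}"
  have "v = (\<Sum>k\<in>?S. delta k (v k))"
    using v by (auto simp: fun_eq_iff sum_fun_apply delta_def coordwise_span_def)
  also have "\<dots> \<in> FF A B C"
    using v unfolding FF_def
    by (intro V.span_sum) (auto simp flip: FF_def intro: delta_in_FF simp: coordwise_span_def)
  finally show "v \<in> FF A B C" .
qed

lemma FF_eq_coordwise_span: "FF A B C = coordwise_span A B C"
  using FF_subset_coordwise_span coordwise_span_subset_FF by blast

theorem lemma6p3:
  fixes A B C A' B' C' :: "'k set"
  assumes "balanced A B C" and "balanced A' B' C'"
  shows "(FF A B C :: ('k \<Rightarrow> 'f::field \<times> 'f) set) \<inter> FF A' B' C'
           = FF (A \<inter> A') (B \<inter> B') (C \<inter> C')"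
proof -
  have "local_span (k \<in> A) (k \<in> B) (k \<in> C) \<inter> local_span (k \<in> A') (k \<in> B') (k \<in> C')
      = (local_span (k \<in> A \<inter> A') (k \<in> B \<inter> B') (k \<in> C \<inter> C') :: ('f \<times> 'f) set)" for k
    using assms by (simp add: balanced_def local_span_Int set_eq_iff)
  then show ?thesis
    unfolding FF_eq_coordwise_span coordwise_span_def set_eq_iff by blast
qed

end
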